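(* Let $\|\cdot\|$ be a norm on $\mathbb{R}^2$. For every $\phi\in\mathsf{D}_0$ and every $\psi\in\big(\pi_{\Omega^\circ},\,2\pi_{\Omega^\circ}-\delta_-(\phi)\big)$ with $\phi+\psi\in\mathsf{D}_0$, one has $\mathcal{J}_R(\phi,\psi)>0$. In particular, if the norm is $C^1$, then $\mathcal{J}_R(\phi,\psi)>0$ for all $\phi\in\mathsf{D}_0$ and $\psi\in(\pi_{\Omega^\circ},2\pi_{\Omega^\circ})$ with $\phi+\psi\in\mathsf{D}_0$.
   Context: Regularity of the norm: the norm is called $C^1$ if it is of class $C^1$ on $\mathbb{R}^2\setminus\{0\}$. Convex trigonometry: let $\Omega=\{x:\|x\|\le1\}$ and $\Omega^\circ=\{p:\langle p,x\rangle\le1\ \forall x\in\Omega\}$ (the closed unit ball of the dual norm). For a compact convex $S\subset\mathbb{R}^2$ with $0$ in its interior, let $\pi_S$ be the area of $S$; for $\theta\in[0,2\pi_S)$ let $P^S_\theta\in\partial S$ be the point such that the region of $S$ swept counterclockwise from the ray through $(1,0)$ to the ray through $P^S_\theta$ has area $\theta/2$; extend $2\pi_S$-periodically and write $P^S_\theta=(\cos_S\theta,\sin_S\theta)$. Angles $\theta$ and $\phi$ correspond if $\cos_\Omega(\theta)\cos_{\Omega^\circ}(\phi)+\sin_\Omega(\theta)\sin_{\Omega^\circ}(\phi)=1$. $C_\circ$ is the nondecreasing (possibly multivalued) map on $\mathbb{R}$ assigning to $\phi$ the maximal closed interval of angles $\theta$ corresponding to $\phi$, normalized so that $C_\circ(\phi+2k\pi_{\Omega^\circ})=C_\circ(\phi)+2k\pi_\Omega$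 for $k\in\mathbb{Z}$; $C^\circ$ is defined symmetrically, and $\delta_\pm(\phi)\ge0$ are defined by $C^\circ(C_\circ(\phi))=[\phi-\delta_-(\phi),\phi+\delta_+(\phi)]$. $\mathsf{D}_0$ is the set of angles where $C_\circ$ is single-valued (equivalently where $\sin_{\Omega^\circ},\cos_{\Omega^\circ}$ are differentiable); for $\phi\in\mathsf{D}_0$ write $\phi_\circ=C_\circ(\phi)$. Reduced Jacobian: for $\phi,\phi+\psi\in\mathsf{D}_0$, $\mathcal{J}_R(\phi,\psi)=2-\big(\sin_{\Omega^\circ}(\phi+\psi)\sin_\Omega(\phi_\circ)+\cos_{\Omega^\circ}(\phi+\psi)\cos_\Omega(\phi_\circ)\big)-\big(\sin_\Omega((\phi+\psi)_\circ)\sin_{\Omega^\circ}(\phi)+\cos_\Omega((\phi+\psi)_\circ)\cos_{\Omega^\circ}(\phi)\big)-\psi\big(\sin_\Omega((\phi+\psi)_\circ)\cos_\Omega(\phi_\circ)-\cos_\Omega((\phi+\psi)_\circ)\sin_\Omega(\phi_\circ)\big)$. *)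

theory Defs
  imports "HOL-Analysis.Analysis"
begin

definition pairing :: "real \<times> real \<Rightarrow> real \<times> real \<Rightarrow> real" where
  "pairing p x = fst p * fst x + snd p * snd x"

definition is_norm :: "(real \<times> real \<Rightarrow> real) \<Rightarrow> bool" where
  "is_norm N \<longleftrightarrow> (\<forall>x. 0 \<le> N x) \<and> (\<forall>x. N x = 0 \<longleftrightarrow> x = 0)
     \<and> (\<forall>c x. N (c *\<^sub>R x) = \<bar>c\<bar> * N x) \<and> (\<forall>x y. N (x + y) \<le> N x + N y)"

definition C1_norm :: "(real \<times> real \<Rightarrow> real) \<Rightarrow> bool" where
  "C1_norm N \<longleftrightarrow> (\<exists>N' :: real \<times> real \<Rightarrow> ((real \<times> real) \<Rightarrow>\<^sub>L real).
      (\<forall>x. x \<noteq> 0 \<longrightarrow> (N has_derivative blinfun_apply (N' x)) (at x))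
      \<and> continuous_on (UNIV - {0}) N')"

definition Omega :: "(real \<times> real \<Rightarrow> real) \<Rightarrow> (real \<times> real) set" where
  "Omega N = {x. N x \<le> 1}"

definition polar :: "(real \<times> real) set \<Rightarrow> (real \<times> real) set" where
  "polar S = {p. \<forall>x\<in>S. pairing p x \<le> 1}"

definition piS :: "(real \<times> real) set \<Rightarrow> real" where
  "piS S = measure lebesgue S"

definition sector :: "(real \<times> real) set \<Rightarrow> real \<Rightarrow> (real \<times> real) set" where
  "sector S \<alpha> = {x \<in> S. \<exists>r\<ge>0. \<exists>t\<in>{0..\<alpha>}. x = (r * cos t, r * sin t)}"

definition tpoint :: "(real \<times> real) set \<Rightarrow> real \<Rightarrow> real \<times> real" where
  "tpoint S \<theta> = (THE p. p \<in> frontier S \<and>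
      (\<exists>\<alpha>\<in>{0..<2*pi}. \<exists>r>0. p = (r * cos \<alpha>, r * sin \<alpha>) \<and>
         2 * measure lebesgue (sector S \<alpha>) = \<theta> - 2 * piS S * of_int \<lfloor>\<theta> / (2 * piS S)\<rfloor>))"

definition cosT :: "(real \<times> real) set \<Rightarrow> real \<Rightarrow> real" where
  "cosT S \<theta> = fst (tpoint S \<theta>)"

definition sinT :: "(real \<times> real) set \<Rightarrow> real \<Rightarrow> real" where
  "sinT S \<theta> = snd (tpoint S \<theta>)"

definition corresp :: "(real \<times> real \<Rightarrow> real) \<Rightarrow> real \<Rightarrow> real \<Rightarrow> bool" where
  "corresp N \<theta> \<phi> \<longleftrightarrow>
     cosT (Omega N) \<theta> * cosT (polar (Omega N)) \<phi> + sinT (Omega N) \<theta> * sinT (polar (Omega N)) \<phi> = 1"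

text \<open>C is an admissible choice of the multivalued map C_lower: each value is a maximal closed
  interval of angles corresponding to phi, the map is nondecreasing, and it satisfies the
  normalisation C(phi + 2 k pi_polar) = C(phi) + 2 k pi_Omega.\<close>
definition is_Clow :: "(real \<times> real \<Rightarrow> real) \<Rightarrow> (real \<Rightarrow> real set) \<Rightarrow> bool" where
  "is_Clow N C \<longleftrightarrow>
     (\<forall>\<phi>. (\<exists>a b. a \<le> b \<and> C \<phi> = {a..b}) \<and> C \<phi> \<subseteq> {\<theta>. corresp N \<theta> \<phi>} \<and>
        (\<forall>J. is_interval J \<and> C \<phi> \<subseteq> J \<and> J \<subseteq> {\<theta>. corresp N \<theta> \<phi>} \<longrightarrow> J = C \<phi>)) \<and>
     (\<forall>\<phi>1 \<phi>2 \<theta>1 \<theta>2. \<phi>1 < \<phi>2 \<and> \<theta>1 \<in> C \<phi>1 \<and> \<theta>2 \<in> C \<phi>2 \<longrightarrow> \<theta>1 \<le> \<theta>2) \<and>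
     (\<forall>\<phi> (k::int). C (\<phi> + 2 * of_int k * piS (polar (Omega N))) =
                   (\<lambda>\<theta>. \<theta> + 2 * of_int k * piS (Omega N)) ` C \<phi>)"

definition Cup :: "(real \<Rightarrow> real set) \<Rightarrow> real \<Rightarrow> real set" where
  "Cup C \<theta> = {\<phi>. \<theta> \<in> C \<phi>}"

text \<open>C^upper(C_lower(phi)) = [phi - delta_minus, phi + delta_plus].\<close>
definition delta_minus :: "(real \<Rightarrow> real set) \<Rightarrow> real \<Rightarrow> real" where
  "delta_minus C \<phi> = \<phi> - Inf (\<Union>\<theta>\<in>C \<phi>. Cup C \<theta>)"

definition D0 :: "(real \<Rightarrow> real set) \<Rightarrow> real set" where
  "D0 C = {\<phi>. \<exists>\<theta>. C \<phi> = {\<theta>}}"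

definition phio :: "(real \<Rightarrow> real set) \<Rightarrow> real \<Rightarrow> real" where
  "phio C \<phi> = (THE \<theta>. C \<phi> = {\<theta>})"

definition JR :: "(real \<times> real \<Rightarrow> real) \<Rightarrow> (real \<Rightarrow> real set) \<Rightarrow> real \<Rightarrow> real \<Rightarrow> real" where
  "JR N C \<phi> \<psi> =
     (let cO = cosT (Omega N); sO = sinT (Omega N);
          cP = cosT (polar (Omega N)); sP = sinT (polar (Omega N));
          a = phio C \<phi>; b = phio C (\<phi> + \<psi>)
      in 2 - (sP (\<phi> + \<psi>) * sO a + cP (\<phi> + \<psi>) * cO a)
           - (sO b * sP \<phi> + cO b * cP \<phi>)
           - \<psi> * (sO b * cO a - cO b * sO a))"

end

(*
  The unit ball Omega and its polar are centrally symmetric convex bodies, so their trigonometric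
  points satisfy P(theta + pi_S) = -P(theta) and turn counterclockwise: the determinant of
  P(theta) and P(theta + d) is positive for 0 < d < pi_S and negative for pi_S < d < 2 pi_S.

  Advancing a dual angle by half a turn advances the corresponding primal angle by exactly half a
  turn: by symmetry the dual point supports Omega at both primal angles, hence along the whole arc
  between them, and maximality of the interval C_o(phi) forces that arc to be a single point.  So
  for psi > pi_polar the primal angle advances by at least pi_Omega, while
  psi < 2 pi_polar - delta_-(phi) keeps the advance below a full turn.  The determinant term of
  J_R is then nonpositive, vanishing only for antipodal points, where one pairing equals -1; both
  pairings are at most 1 by the definition of the polar, so J_R > 0.  For a C^1 norm the supporting
  functional at a boundary point is the derivative of the norm, hence unique, which forces
  delta_-(phi) = 0.
*)

theory Submission
  imports Defs
begin

section \<open>Polar angles in the plane\<close>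

lemma int_nonneg_if_multiple_gt:
  fixes c :: real
  assumes "c > 0" "- c < c * of_int n"
  shows "0 \<le> n"
proof -
  have "c * (- 1) < c * of_int n"
    using assms(2) by simp
  then have "- 1 < real_of_int n"
    using assms(1) mult_less_cancel_left_pos by blast
  then show ?thesis
    by linarith
qed

lemma int_zero_if_multiple_bounded:
  fixes c :: real
  assumes "c > 0" "- c < c * of_int n" "c * of_int n < c"
  shows "n = 0"
proof -
  have "- c < c * of_int (- n)"
    using assms(3) by simp
  then show ?thesis
    using int_nonneg_if_multiple_gt[OF assms(1,2)] int_nonneg_if_multiple_gt[OF assms(1)] by fastforce
qed

definition cross :: "real \<times> real \<Rightarrow> real \<times> real \<Rightarrow> real" where
  "cross u v = fst u * snd v - snd u * fst v"

definition polar_angle :: "real \<times> real \<Rightarrow> real" where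
  "polar_angle x = Arg2pi (Complex (fst x) (snd x))"

lemma polar_angle_nonneg: "0 \<le> polar_angle x"
  and polar_angle_less_2pi: "polar_angle x < 2 * pi"
  unfolding polar_angle_def using Arg2pi by auto

lemma polar_angle_zero [simp]: "polar_angle 0 = 0"
  by (simp add: polar_angle_def Complex_eq)

lemma polar_decomposition: "x = (norm x * cos (polar_angle x), norm x * sin (polar_angle x))"
proof -
  have "cmod (Complex (fst x) (snd x)) = norm x"
    by (simp add: complex_norm norm_prod_def)
  then show ?thesis
    using cos_Arg2pi[of "Complex (fst x) (snd x)"] sin_Arg2pi[of "Complex (fst x) (snd x)"]
    by (simp add: polar_angle_def prod_eq_iff)
qed

lemma norm_polar_point: "norm (r * cos t, r * sin t) = \<bar>r\<bar>"
proof -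
  have "(r * cos t)\<^sup>2 + (r * sin t)\<^sup>2 = r\<^sup>2"
    by (simp add: power_mult_distrib flip: distrib_left)
  then show ?thesis
    by (simp add: norm_prod_def)
qed

lemma polar_angle_polar_point:
  assumes "r > 0"
  obtains n :: int where "t = polar_angle (r * cos t, r * sin t) + 2 * pi * n"
proof -
  let ?x = "(r * cos t, r * sin t)"
  have "?x = (r * cos (polar_angle ?x), r * sin (polar_angle ?x))"
    using polar_decomposition[of ?x] norm_polar_point[of r t] assms by simp
  then have "cos t = cos (polar_angle ?x)" "sin t = sin (polar_angle ?x)"
    using assms by auto
  then show ?thesis
    using sin_cos_eq_iff that by metis
qed

lemma polar_angle_polar_point_le:
  assumes "r > 0" "0 \<le> t"
  shows "polar_angle (r * cos t, r * sin t) \<le> t"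
proof -
  obtain n :: int where n: "t = polar_angle (r * cos t, r * sin t) + 2 * pi * n"
    using polar_angle_polar_point assms(1) by blast
  have "- (2 * pi) < 2 * pi * n"
    using n assms(2) polar_angle_less_2pi[of "(r * cos t, r * sin t)"] by linarith
  then have "n \<ge> 0"
    using int_nonneg_if_multiple_gt[of "2 * pi"] by simp
  then have "0 \<le> 2 * pi * n"
    by simp
  then show ?thesis
    using n by linarith
qed

lemma polar_angle_polar_point_eq:
  assumes "r > 0" "0 \<le> t" "t < 2 * pi"
  shows "polar_angle (r * cos t, r * sin t) = t"
proof -
  obtain n :: int where n: "t = polar_angle (r * cos t, r * sin t) + 2 * pi * n"
    using polar_angle_polar_point assms(1) by blast
  have "- (2 * pi) < 2 * pi * n" "2 * pi * n < 2 * pi"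
    using n assms polar_angle_nonneg[of "(r * cos t, r * sin t)"]
      polar_angle_less_2pi[of "(r * cos t, r * sin t)"] by linarith+
  then have "n = 0"
    using int_zero_if_multiple_bounded[of "2 * pi"] by simp
  then show ?thesis
    using n by simp
qed

lemma floor_residue_bounds:
  fixes T :: real
  assumes "T > 0"
  shows "0 \<le> \<theta> - T * of_int \<lfloor>\<theta> / T\<rfloor>" "\<theta> - T * of_int \<lfloor>\<theta> / T\<rfloor> < T"
proof -
  have "of_int \<lfloor>\<theta> / T\<rfloor> \<le> \<theta> / T" "\<theta> / T < of_int \<lfloor>\<theta> / T\<rfloor> + 1"
    by linarith+
  then have "T * of_int \<lfloor>\<theta> / T\<rfloor> \<le> T * (\<theta> / T)" "T * (\<theta> / T) < T * (of_int \<lfloor>\<theta> / T\<rfloor> + 1)"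
    using assms by (intro mult_left_mono mult_strict_left_mono; simp)+
  then show "0 \<le> \<theta> - T * of_int \<lfloor>\<theta> / T\<rfloor>" "\<theta> - T * of_int \<lfloor>\<theta> / T\<rfloor> < T"
    using assms by (simp_all add: field_simps)
qed

lemma floor_residue_eq:
  fixes T :: real
  assumes "T > 0" "0 \<le> s" "s < T" "\<theta> = s + T * of_int k"
  shows "\<theta> - T * of_int \<lfloor>\<theta> / T\<rfloor> = s"
proof -
  have "\<theta> / T = of_int k + s / T"
    using assms by (simp add: field_simps)
  then have "\<lfloor>\<theta> / T\<rfloor> = k"
    using assms by (simp add: floor_eq_iff)
  then show ?thesis
    using assms by simp
qed

lemma cross_polar_points:
  "cross (r1 * cos a1, r1 * sin a1) (r2 * cos a2, r2 * sin a2) = r1 * r2 * sin (a2 - a1)"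
  unfolding cross_def by (simp add: sin_diff algebra_simps)

lemma negligible_line_through_origin:
  assumes "u \<noteq> 0"
  shows "negligible {x. cross u x = 0}"
proof -
  have "{x. cross u x = 0} = {x. (- snd u, fst u) \<bullet> x = 0}"
    by (auto simp: cross_def inner_prod_def algebra_simps)
  moreover have "(- snd u, fst u) \<noteq> 0"
    using assms by (auto simp: prod_eq_iff)
  ultimately show ?thesis
    using negligible_hyperplane by metis
qed

lemma negligible_ray:
  fixes t :: real
  shows "negligible {x. \<exists>r. x = (r * cos t, r * sin t)}"
proof -
  have "(cos t, sin t) \<noteq> 0"
    using norm_polar_point[of 1 t] by auto
  moreover have "{x. \<exists>r. x = (r * cos t, r * sin t)} \<subseteq> {x. cross (cos t, sin t) x = 0}"
    by (auto simp: cross_def)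
  ultimately show ?thesis
    using negligible_line_through_origin negligible_subset by blast
qed

section \<open>Sector areas of symmetric convex bodies\<close>

definition symmetric_convex_body :: "(real \<times> real) set \<Rightarrow> bool" where
  "symmetric_convex_body S \<longleftrightarrow> compact S \<and> convex S \<and> (\<forall>x\<in>S. - x \<in> S) \<and> 0 \<in> interior S"

definition sector_area :: "(real \<times> real) set \<Rightarrow> real \<Rightarrow> real" where
  "sector_area S \<beta> = measure lebesgue (sector S \<beta>)"

lemma sector_eq_polar_angle_le:
  assumes "0 \<le> \<beta>"
  shows "sector S \<beta> = {x\<in>S. x = 0 \<or> polar_angle x \<le> \<beta>}"
proof (intro set_eqI iffI)
  fix x assume "x \<in> sector S \<beta>"
  then obtain r t where x: "x \<in> S" "r \<ge> 0" "t \<in> {0..\<beta>}" "x = (r * cos t, r * sin t)"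
    unfolding sector_def by blast
  then show "x \<in> {x\<in>S. x = 0 \<or> polar_angle x \<le> \<beta>}"
    using polar_angle_polar_point_le[of r t] by (cases "r = 0") (auto simp: zero_prod_def)
next
  fix x assume x: "x \<in> {x\<in>S. x = 0 \<or> polar_angle x \<le> \<beta>}"
  show "x \<in> sector S \<beta>"
  proof (cases "x = 0")
    case True
    then show ?thesis
      using x assms unfolding sector_def by (auto simp: zero_prod_def intro!: exI[of _ 0] bexI[of _ 0])
  next
    case False
    then show ?thesis
      using x polar_decomposition[of x] polar_angle_nonneg[of x] unfolding sector_def
      by (auto intro!: exI[of _ "norm x"] bexI[of _ "polar_angle x"])
  qed
qed

lemma sector_mono: "\<alpha> \<le> \<beta> \<Longrightarrow> sector S \<alpha> \<subseteq> sector S \<beta>"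
  unfolding sector_def by fastforce

lemma sector_empty: "\<beta> < 0 \<Longrightarrow> sector S \<beta> = {}"
  unfolding sector_def by auto

lemma sector_full:
  assumes "2 * pi \<le> \<beta>"
  shows "sector S \<beta> = S"
proof -
  have "0 \<le> \<beta>"
    using assms pi_gt_zero by linarith
  moreover have "polar_angle x \<le> \<beta>" for x
    using assms polar_angle_less_2pi[of x] by linarith
  ultimately show ?thesis
    using sector_eq_polar_angle_le[of \<beta> S] by auto
qed

lemma sector_memI:
  "\<lbrakk>x \<in> S; r \<ge> 0; 0 \<le> t; t \<le> \<beta>; x = (r * cos t, r * sin t)\<rbrakk> \<Longrightarrow> x \<in> sector S \<beta>"
  unfolding sector_def by (intro CollectI conjI exI[of _ r] bexI[of _ t]) auto

lemma Inter_sector_right_limit: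
  assumes "0 \<le> \<alpha>" "\<And>n. \<alpha> < s n" "s \<longlonglongrightarrow> \<alpha>"
  shows "(\<Inter>n. sector S (s n)) = sector S \<alpha>"
proof
  show "(\<Inter>n. sector S (s n)) \<subseteq> sector S \<alpha>"
  proof
    fix x assume x: "x \<in> (\<Inter>n. sector S (s n))"
    have "x \<in> {x\<in>S. x = 0 \<or> polar_angle x \<le> s n}" for n
      using x sector_eq_polar_angle_le[of "s n" S] assms(1) assms(2)[of n] by auto
    then have "x \<in> S" "x = 0 \<or> polar_angle x \<le> \<alpha>"
      using LIMSEQ_le_const[OF assms(3), of "polar_angle x"] by auto
    then show "x \<in> sector S \<alpha>"
      using sector_eq_polar_angle_le[OF assms(1)] by blast
  qed
  show "sector S \<alpha> \<subseteq> (\<Inter>n. sector S (s n))"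
    using sector_mono assms(2) by (meson INT_greatest less_imp_le)
qed

lemma sector_diff_Union_left_limit:
  assumes "\<And>n. 0 < s n" "\<And>n. s n \<le> \<alpha>" "s \<longlonglongrightarrow> \<alpha>"
  shows "sector S \<alpha> - (\<Union>n. sector S (s n)) \<subseteq> {x. \<exists>r. x = (r * cos \<alpha>, r * sin \<alpha>)}"
proof
  fix x assume x: "x \<in> sector S \<alpha> - (\<Union>n. sector S (s n))"
  have "0 \<le> \<alpha>"
    using assms(1,2)[of 0] by linarith
  then have "x \<in> {x\<in>S. x = 0 \<or> polar_angle x \<le> \<alpha>}"
    using x sector_eq_polar_angle_le[of \<alpha> S] by simp
  moreover have "x \<notin> {x\<in>S. x = 0 \<or> polar_angle x \<le> s n}" for n
  proof -
    have "x \<notin> sector S (s n)"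
      using x by blast
    then show ?thesis
      using sector_eq_polar_angle_le[OF less_imp_le[OF assms(1)[of n]], of S] by simp
  qed
  ultimately have "x \<noteq> 0" "\<And>n. s n \<le> polar_angle x" "polar_angle x \<le> \<alpha>"
    by (auto simp: not_le less_imp_le)
  then have "polar_angle x = \<alpha>"
    using LIMSEQ_le_const2[OF assms(3), of "polar_angle x"] by auto
  then show "x \<in> {x. \<exists>r. x = (r * cos \<alpha>, r * sin \<alpha>)}"
    using polar_decomposition[of x] by auto
qed

context
  fixes S :: "(real \<times> real) set"
  assumes S: "symmetric_convex_body S"
begin

lemma body_compact: "compact S"
  and body_convex: "convex S"
  and body_symmetric: "x \<in> S \<Longrightarrow> - x \<in> S"
  and body_zero_interior: "0 \<in> interior S"
  using S unfolding symmetric_convex_body_def by auto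

lemma sector_compact: "compact (sector S \<beta>)"
proof -
  obtain R where R: "\<And>x. x \<in> S \<Longrightarrow> norm x \<le> R"
    using compact_imp_bounded[OF body_compact] unfolding bounded_iff by blast
  let ?g = "\<lambda>p::real\<times>real. (fst p * cos (snd p), fst p * sin (snd p))"
  have "sector S \<beta> = S \<inter> ?g ` ({0..R} \<times> {0..\<beta>})"
  proof (intro set_eqI iffI)
    fix x assume "x \<in> sector S \<beta>"
    then obtain r t where x: "x \<in> S" "r \<ge> 0" "t \<in> {0..\<beta>}" "x = (r * cos t, r * sin t)"
      unfolding sector_def by blast
    then have "r \<le> R"
      using R[of x] norm_polar_point[of r t] by simp
    then show "x \<in> S \<inter> ?g ` ({0..R} \<times> {0..\<beta>})"
      using x by (auto intro!: image_eqI[of _ _ "(r, t)"])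
  next
    fix x assume "x \<in> S \<inter> ?g ` ({0..R} \<times> {0..\<beta>})"
    then show "x \<in> sector S \<beta>"
      by (auto intro: sector_memI)
  qed
  moreover have "compact (?g ` ({0..R} \<times> {0..\<beta>}))"
    by (intro compact_continuous_image compact_Times compact_Icc continuous_intros)
  ultimately show ?thesis
    using compact_Int body_compact by auto
qed

lemma sector_lmeasurable: "sector S \<beta> \<in> lmeasurable"
  using sector_compact lmeasurable_compact by blast

lemma sector_area_mono: "\<alpha> \<le> \<beta> \<Longrightarrow> sector_area S \<alpha> \<le> sector_area S \<beta>"
  unfolding sector_area_def
  by (intro measure_mono_fmeasurable sector_mono fmeasurableD sector_lmeasurable)

lemma sector_area_diff:
  "\<alpha> \<le> \<beta> \<Longrightarrow> measure lebesgue (sector S \<beta> - sector S \<alpha>) = sector_area S \<beta> - sector_area S \<alpha>"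
  unfolding sector_area_def
  using sector_lmeasurable sector_mono[of \<alpha> \<beta> S]
  by (intro measure_Diff) (auto simp: fmeasurableD emeasure_eq_measure2)

lemma sector_area_zero: "sector_area S 0 = 0"
proof -
  have "sector S 0 \<subseteq> {x. \<exists>r. x = (r * cos 0, r * sin 0)}"
    unfolding sector_def by auto
  then show ?thesis
    unfolding sector_area_def using negligible_ray negligible_imp_measure0 negligible_subset by blast
qed

lemma sector_area_2pi: "sector_area S (2 * pi) = piS S"
  unfolding sector_area_def piS_def by (simp add: sector_full)

lemma sector_area_strict_mono:
  assumes "0 \<le> \<alpha>" "\<alpha> < \<beta>" "\<beta> \<le> 2 * pi"
  shows "sector_area S \<alpha> < sector_area S \<beta>"
proof -
  obtain e where e: "e > 0" "ball 0 e \<subseteq> S"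
    using body_zero_interior unfolding mem_interior by blast
  define U where "U = ball 0 e \<inter> {x. \<alpha> < polar_angle x \<and> polar_angle x < \<beta>}"
  have "{x. \<alpha> < polar_angle x \<and> polar_angle x < \<beta>} =
      (\<lambda>x. Complex (fst x) (snd x)) -` ({y. \<alpha> < Arg2pi y} \<inter> {y. Arg2pi y < \<beta>})"
    unfolding polar_angle_def by auto
  then have "open U"
    unfolding U_def Complex_eq
    by (simp only:) (intro open_Int open_ball open_vimage open_Arg2pi2pi_less_Int continuous_intros assms)
  define m where "m = (e/2 * cos ((\<alpha> + \<beta>) / 2), e/2 * sin ((\<alpha> + \<beta>) / 2))"
  have "polar_angle m = (\<alpha> + \<beta>) / 2"
    unfolding m_def by (rule polar_angle_polar_point_eq) (use e assms in auto)
  moreover have "norm m = e/2"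
    unfolding m_def using norm_polar_point[of "e/2"] e by simp
  ultimately have "m \<in> U"
    unfolding U_def using e assms by auto
  then have "\<not> negligible U"
    using open_not_negligible \<open>open U\<close> by blast
  moreover have "U \<subseteq> sector S \<beta> - sector S \<alpha>"
  proof
    fix x assume "x \<in> U"
    then have "x \<in> S" "\<alpha> < polar_angle x" "polar_angle x < \<beta>"
      using e unfolding U_def by auto
    moreover have "x \<noteq> 0"
      using \<open>\<alpha> < polar_angle x\<close> assms(1) by auto
    ultimately show "x \<in> sector S \<beta> - sector S \<alpha>"
      using sector_eq_polar_angle_le[of \<alpha> S] sector_eq_polar_angle_le[of \<beta> S] assms by auto
  qed
  ultimately have "measure lebesgue (sector S \<beta> - sector S \<alpha>) \<noteq> 0"
    using negligible_iff_measure0 negligible_subset sector_lmeasurable fmeasurable_Diff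
    by (metis fmeasurableD)
  then show ?thesis
    using sector_area_diff[of \<alpha> \<beta>] sector_area_mono[of \<alpha> \<beta>] assms by linarith
qed

lemma sector_area_tendsto_at_right:
  assumes "0 \<le> \<alpha>"
  shows "(sector_area S \<longlongrightarrow> sector_area S \<alpha>) (at_right \<alpha>)"
proof (rule tendsto_at_right_sequentially[of \<alpha> "\<alpha> + 1"])
  fix s :: "nat \<Rightarrow> real"
  assume s: "\<And>n. \<alpha> < s n" "decseq s" "s \<longlonglongrightarrow> \<alpha>"
  have "(\<Inter>n. sector S (s n)) = sector S \<alpha>"
    by (rule Inter_sector_right_limit[OF assms s(1,3)])
  moreover have "(\<lambda>n. measure lebesgue (sector S (s n))) \<longlonglongrightarrow> measure lebesgue (\<Inter>n. sector S (s n))"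
    using s(2) sector_mono fmeasurableD2[OF sector_lmeasurable]
    by (intro Lim_measure_decseq) (auto simp: decseq_def fmeasurableD sector_lmeasurable)
  ultimately show "(\<lambda>n. sector_area S (s n)) \<longlonglongrightarrow> sector_area S \<alpha>"
    unfolding sector_area_def by simp
qed simp

text \<open>Only the ray of angle \<open>\<alpha>\<close>, a null set, separates \<open>sector S \<alpha>\<close> from the union of the
  smaller sectors.\<close>
lemma sector_area_tendsto_at_left:
  assumes "0 < \<alpha>"
  shows "(sector_area S \<longlongrightarrow> sector_area S \<alpha>) (at_left \<alpha>)"
proof (rule tendsto_at_left_sequentially[OF assms])
  fix s :: "nat \<Rightarrow> real"
  assume s: "\<And>n. s n < \<alpha>" "\<And>n. 0 < s n" "incseq s" "s \<longlonglongrightarrow> \<alpha>"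
  let ?U = "\<Union>n. sector S (s n)"
  have sub: "?U \<subseteq> sector S \<alpha>"
    using sector_mono s(1) by (meson UN_least less_imp_le)
  have ray: "sector S \<alpha> - ?U \<subseteq> {x. \<exists>r. x = (r * cos \<alpha>, r * sin \<alpha>)}"
    by (rule sector_diff_Union_left_limit[OF s(2) less_imp_le[OF s(1)] s(4)])
  moreover have "?U - sector S \<alpha> = {}"
    using sub by blast
  ultimately have "negligible (sector S \<alpha> - ?U \<union> (?U - sector S \<alpha>))"
    using negligible_subset[OF negligible_ray ray] by simp
  then have "measure lebesgue ?U = sector_area S \<alpha>"
    unfolding sector_area_def by (rule measure_negligible_symdiff[OF sector_lmeasurable])
  moreover have U: "?U \<in> lmeasurable"
    using sub sector_mono s(1) sector_lmeasurable
    by (intro fmeasurable_UN[of UNIV _ "sector S \<alpha>"]) (auto simp: less_imp_le fmeasurableD)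
  moreover have "(\<lambda>n. measure lebesgue (sector S (s n))) \<longlonglongrightarrow> measure lebesgue ?U"
  proof (rule Lim_measure_incseq)
    show "emeasure lebesgue ?U \<noteq> \<infinity>"
      using fmeasurableD2[OF U] by (metis infinity_ennreal_def)
  qed (use s(3) sector_mono in \<open>auto simp: incseq_def fmeasurableD sector_lmeasurable\<close>)
  ultimately show "(\<lambda>n. sector_area S (s n)) \<longlonglongrightarrow> sector_area S \<alpha>"
    unfolding sector_area_def by simp
qed

lemma sector_area_continuous_on: "continuous_on {0..2 * pi} (sector_area S)"
proof (intro continuous_at_imp_continuous_on ballI)
  fix \<alpha> assume \<alpha>: "\<alpha> \<in> {0..2 * pi}"
  have "(sector_area S \<longlongrightarrow> sector_area S \<alpha>) (at_left \<alpha>)"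
  proof (cases "\<alpha> = 0")
    case True
    have "eventually (\<lambda>\<beta>. sector_area S \<beta> = sector_area S 0) (at_left 0)"
      unfolding eventually_at_left_field
      by (auto simp: sector_area_def sector_empty sector_area_zero[unfolded sector_area_def] intro!: exI[of _ "-1"])
    then show ?thesis
      using True tendsto_eventually by blast
  qed (use \<alpha> sector_area_tendsto_at_left in auto)
  then show "isCont (sector_area S) \<alpha>"
    using sector_area_tendsto_at_right[of \<alpha>] \<alpha> unfolding continuous_at filterlim_at_split by simp
qed

lemma sector_add_pi:
  assumes "0 \<le> \<alpha>" "\<alpha> \<le> pi"
  shows "sector S (\<alpha> + pi) = sector S pi \<union> uminus ` sector S \<alpha>"
proof (intro set_eqI iffI)
  fix x assume "x \<in> sector S (\<alpha> + pi)"
  then obtain r t where x: "x \<in> S" "r \<ge> 0" "t \<in> {0..\<alpha> + pi}" "x = (r * cos t, r * sin t)"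
    unfolding sector_def by blast
  show "x \<in> sector S pi \<union> uminus ` sector S \<alpha>"
  proof (cases "t \<le> pi")
    case True
    then show ?thesis
      using x by (auto intro: sector_memI)
  next
    case False
    have "- x = (r * cos (t - pi), r * sin (t - pi))"
      using x by (simp add: cos_diff sin_diff)
    then have "- x \<in> sector S \<alpha>"
      using x False body_symmetric by (intro sector_memI[of _ _ r "t - pi"]) auto
    then show ?thesis
      by (metis UnI2 image_eqI minus_minus)
  qed
next
  fix x assume "x \<in> sector S pi \<union> uminus ` sector S \<alpha>"
  then consider "x \<in> sector S pi" | y where "y \<in> sector S \<alpha>" "x = - y"
    by blast
  then show "x \<in> sector S (\<alpha> + pi)"
  proof cases
    case 1
    then show ?thesis
      using sector_mono[of pi "\<alpha> + pi" S] assms by auto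
  next
    case 2
    then obtain r t where y: "y \<in> S" "r \<ge> 0" "t \<in> {0..\<alpha>}" "y = (r * cos t, r * sin t)"
      unfolding sector_def by blast
    have "x = (r * cos (t + pi), r * sin (t + pi))"
      using 2 y by (simp add: cos_add sin_add)
    then show ?thesis
      using 2 y body_symmetric by (intro sector_memI[of _ _ r "t + pi"]) auto
  qed
qed

lemma sector_area_add_pi:
  assumes "0 \<le> \<alpha>" "\<alpha> \<le> pi"
  shows "sector_area S (\<alpha> + pi) = sector_area S \<alpha> + sector_area S pi"
proof -
  have neg: "uminus ` sector S \<alpha> \<in> lmeasurable"
    using lmeasurable_compact compact_negations sector_compact by blast
  have "measure lebesgue (uminus ` sector S \<alpha>) = sector_area S \<alpha>"
    using measure_lebesgue_affine[of "-1" 0 "sector S \<alpha>"] unfolding sector_area_def by simp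
  moreover have "sector S pi \<inter> uminus ` sector S \<alpha> \<subseteq> {x. cross (1, 0) x = 0}"
  proof
    fix x assume x: "x \<in> sector S pi \<inter> uminus ` sector S \<alpha>"
    then obtain r t where "r \<ge> 0" "t \<in> {0..pi}" "x = (r * cos t, r * sin t)"
      unfolding sector_def by blast
    then have "snd x \<ge> 0"
      using sin_ge_zero by simp
    obtain r' t' where "r' \<ge> 0" "t' \<in> {0..\<alpha>}" "x = - (r' * cos t', r' * sin t')"
      using x unfolding sector_def by blast
    then have "snd x \<le> 0"
      using sin_ge_zero[of t'] assms by simp
    show "x \<in> {x. cross (1, 0) x = 0}"
      using \<open>snd x \<ge> 0\<close> \<open>snd x \<le> 0\<close> by (simp add: cross_def)
  qed
  then have "measure lebesgue (sector S pi \<inter> uminus ` sector S \<alpha>) = 0"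
    using negligible_line_through_origin[of "(1, 0)"] negligible_subset negligible_imp_measure0
    by (metis one_neq_zero prod.inject zero_prod_def)
  ultimately show ?thesis
    using measure_Un3[OF sector_lmeasurable neg] sector_add_pi[OF assms]
    unfolding sector_area_def by simp
qed

lemma sector_area_pi: "sector_area S pi = piS S / 2"
  using sector_area_add_pi[of pi] sector_area_2pi by simp

lemma piS_pos: "piS S > 0"
  using sector_area_strict_mono[of 0 "2 * pi"] sector_area_zero sector_area_2pi by simp

section \<open>Trigonometric points of a symmetric convex body\<close>

lemma body_closed: "closed S"
  using body_compact compact_imp_closed by blast

lemma frontier_subset_body: "frontier S \<subseteq> S"
  using body_closed frontier_subset_closed by blast

lemma zero_notin_frontier: "0 \<notin> frontier S"
  using body_zero_interior unfolding frontier_def by blast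

lemma uminus_frontier: "x \<in> frontier S \<Longrightarrow> - x \<in> frontier S"
proof -
  have "uminus ` S = S"
    using body_symmetric by (force intro: image_eqI[of _ _ "- _"])
  then have "uminus ` interior S = interior S"
    using interior_negations[of S] by simp
  moreover assume "x \<in> frontier S"
  ultimately show "- x \<in> frontier S"
    using body_symmetric body_closed unfolding frontier_def closure_closed[OF body_closed]
    by (metis Diff_iff image_eqI minus_minus)
qed

lemma frontier_ray_unique:
  assumes "0 < r1" "r1 < r2" "r1 *\<^sub>R u \<in> frontier S"
  shows "r2 *\<^sub>R u \<notin> frontier S"
proof
  assume "r2 *\<^sub>R u \<in> frontier S"
  then have "open_segment 0 (r2 *\<^sub>R u) \<subseteq> interior S"
    using in_interior_closure_convex_segment body_convex body_zero_interior
    unfolding frontier_def by blast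
  moreover have "u \<noteq> 0"
    using assms(3) zero_notin_frontier by auto
  then have "r1 *\<^sub>R u \<in> open_segment 0 (r2 *\<^sub>R u)"
    using assms unfolding in_segment
    by (intro conjI exI[of _ "r1 / r2"]) auto
  ultimately show False
    using assms(3) unfolding frontier_def by blast
qed

lemma frontier_ray_eq:
  "\<lbrakk>0 < r1; 0 < r2; r1 *\<^sub>R u \<in> frontier S; r2 *\<^sub>R u \<in> frontier S\<rbrakk> \<Longrightarrow> r1 = r2"
  by (meson frontier_ray_unique linorder_neqE_linordered_idom)

lemma ray_meets_frontier:
  assumes "u \<noteq> 0"
  obtains r where "r > 0" "r *\<^sub>R u \<in> frontier S"
proof -
  obtain R where R: "R > 0" "\<And>x. x \<in> S \<Longrightarrow> norm x < R"
    using compact_imp_bounded[OF body_compact] unfolding bounded_pos_less by blast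
  define w where "w = (R / norm u) *\<^sub>R u"
  have "w \<notin> S"
    using R(2)[of w] assms unfolding w_def by auto
  moreover have "0 \<in> S"
    using body_zero_interior interior_subset by blast
  ultimately have "closed_segment 0 w \<inter> frontier S \<noteq> {}"
    by (intro connected_Int_frontier) auto
  then obtain s where s: "0 \<le> s" "(s * (R / norm u)) *\<^sub>R u \<in> frontier S"
    unfolding closed_segment_def w_def by auto
  moreover have "s * (R / norm u) \<noteq> 0"
    using s(2) zero_notin_frontier by auto
  ultimately show ?thesis
    using that[of "s * (R / norm u)"] R(1) by simp
qed

lemma sector_area_surj:
  assumes "0 \<le> s" "s < 2 * piS S"
  obtains \<alpha> where "0 \<le> \<alpha>" "\<alpha> < 2 * pi" "2 * sector_area S \<alpha> = s"
proof -
  obtain \<alpha> where "0 \<le> \<alpha>" "\<alpha> \<le> 2 * pi" "sector_area S \<alpha> = s / 2"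
    using IVT'[of "sector_area S" 0 "s / 2" "2 * pi"] assms
      sector_area_zero sector_area_2pi sector_area_continuous_on by auto
  moreover have "\<alpha> \<noteq> 2 * pi"
    using calculation sector_area_2pi assms by auto
  ultimately show ?thesis
    using that by simp
qed

lemma sector_area_inj:
  "\<lbrakk>0 \<le> \<alpha>; \<alpha> \<le> 2 * pi; 0 \<le> \<beta>; \<beta> \<le> 2 * pi; sector_area S \<alpha> = sector_area S \<beta>\<rbrakk> \<Longrightarrow> \<alpha> = \<beta>"
  using sector_area_strict_mono[of \<alpha> \<beta>] sector_area_strict_mono[of \<beta> \<alpha>]
  by (cases \<alpha> \<beta> rule: linorder_cases) auto

text \<open>The point in the definition of \<open>tpoint\<close> is unique: its angle is determined by strict
  monotonicity of the sector area, and its radius by convexity.\<close>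
lemma tpoint_eqI:
  assumes "p \<in> frontier S" "0 \<le> \<alpha>" "\<alpha> < 2 * pi" "r > 0" "p = (r * cos \<alpha>, r * sin \<alpha>)"
    and "\<theta> = 2 * sector_area S \<alpha> + 2 * piS S * of_int k"
  shows "tpoint S \<theta> = p"
  unfolding tpoint_def
proof (rule the_equality)
  have "sector_area S \<alpha> < piS S"
    using sector_area_strict_mono[of \<alpha> "2 * pi"] sector_area_2pi assms by simp
  then have residue: "\<theta> - 2 * piS S * of_int \<lfloor>\<theta> / (2 * piS S)\<rfloor> = 2 * sector_area S \<alpha>"
    using floor_residue_eq[of "2 * piS S"] piS_pos sector_area_mono[of 0 \<alpha>] sector_area_zero assms
    by simp
  then show "p \<in> frontier S \<and> (\<exists>\<alpha>\<in>{0..<2*pi}. \<exists>r>0. p = (r * cos \<alpha>, r * sin \<alpha>) \<and>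
      2 * measure lebesgue (sector S \<alpha>) = \<theta> - 2 * piS S * of_int \<lfloor>\<theta> / (2 * piS S)\<rfloor>)"
    using assms(1-5) unfolding sector_area_def by (intro conjI bexI[of _ \<alpha>] exI[of _ r]) auto
  fix q assume "q \<in> frontier S \<and> (\<exists>\<beta>\<in>{0..<2*pi}. \<exists>r>0. q = (r * cos \<beta>, r * sin \<beta>) \<and>
      2 * measure lebesgue (sector S \<beta>) = \<theta> - 2 * piS S * of_int \<lfloor>\<theta> / (2 * piS S)\<rfloor>)"
  then obtain \<beta> r' where q: "q \<in> frontier S" "0 \<le> \<beta>" "\<beta> < 2 * pi" "r' > 0"
    "q = (r' * cos \<beta>, r' * sin \<beta>)" "sector_area S \<beta> = sector_area S \<alpha>"
    using residue unfolding sector_area_def by auto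
  then have "\<beta> = \<alpha>"
    using sector_area_inj assms by simp
  then have "r' = r"
    using q assms frontier_ray_eq[of r' r "(cos \<alpha>, sin \<alpha>)"] by simp
  then show "q = p"
    using q assms \<open>\<beta> = \<alpha>\<close> by simp
qed

lemma tpoint_polar_form:
  obtains \<alpha> r k where "0 \<le> \<alpha>" "\<alpha> < 2 * pi" "r > 0" "tpoint S \<theta> = (r * cos \<alpha>, r * sin \<alpha>)"
    "tpoint S \<theta> \<in> frontier S" "\<theta> = 2 * sector_area S \<alpha> + 2 * piS S * of_int k"
proof -
  define k where "k = \<lfloor>\<theta> / (2 * piS S)\<rfloor>"
  obtain \<alpha> where \<alpha>: "0 \<le> \<alpha>" "\<alpha> < 2 * pi" "2 * sector_area S \<alpha> = \<theta> - 2 * piS S * of_int k"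
    using sector_area_surj floor_residue_bounds[of "2 * piS S" \<theta>] piS_pos unfolding k_def
    by (metis mult_pos_pos zero_less_numeral)
  have "(cos \<alpha>, sin \<alpha>) \<noteq> 0"
    using norm_polar_point[of 1 \<alpha>] by auto
  then obtain r where "r > 0" "r *\<^sub>R (cos \<alpha>, sin \<alpha>) \<in> frontier S"
    by (rule ray_meets_frontier)
  then have r: "r > 0" "(r * cos \<alpha>, r * sin \<alpha>) \<in> frontier S"
    by simp_all
  moreover have \<theta>: "\<theta> = 2 * sector_area S \<alpha> + 2 * piS S * of_int k"
    using \<alpha>(3) by simp
  ultimately have tp: "tpoint S \<theta> = (r * cos \<alpha>, r * sin \<alpha>)"
    using \<alpha> by (intro tpoint_eqI[of _ \<alpha> r _ k]) auto
  show ?thesis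
  proof (rule that[of \<alpha> r k])
    show "tpoint S \<theta> \<in> frontier S"
      using tp r by simp
  qed (fact \<alpha>(1) \<alpha>(2) r(1) tp \<theta>)+
qed

lemma tpoint_frontier: "tpoint S \<theta> \<in> frontier S"
  by (rule tpoint_polar_form) auto

lemma tpoint_in_body: "tpoint S \<theta> \<in> S"
  using tpoint_frontier frontier_subset_body by blast

lemma tpoint_nonzero: "tpoint S \<theta> \<noteq> 0"
  using tpoint_frontier zero_notin_frontier by metis

lemma tpoint_add_piS: "tpoint S (\<theta> + piS S) = - tpoint S \<theta>"
proof -
  obtain \<alpha> r k where p: "0 \<le> \<alpha>" "\<alpha> < 2 * pi" "r > 0" "tpoint S \<theta> = (r * cos \<alpha>, r * sin \<alpha>)"
    "tpoint S \<theta> \<in> frontier S" "\<theta> = 2 * sector_area S \<alpha> + 2 * piS S * of_int k"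
    by (rule tpoint_polar_form)
  have fr: "- tpoint S \<theta> \<in> frontier S"
    using uminus_frontier p(5) .
  show ?thesis
  proof (cases "\<alpha> < pi")
    case True
    then have "\<theta> + piS S = 2 * sector_area S (\<alpha> + pi) + 2 * piS S * of_int k"
      using p sector_area_add_pi[of \<alpha>] sector_area_pi by simp
    then show ?thesis
      using p True fr by (intro tpoint_eqI[of _ "\<alpha> + pi" r _ k]) auto
  next
    case False
    then have "\<theta> + piS S = 2 * sector_area S (\<alpha> - pi) + 2 * piS S * of_int (k + 1)"
      using p sector_area_add_pi[of "\<alpha> - pi"] sector_area_pi by (simp add: algebra_simps)
    then show ?thesis
      using p False fr by (intro tpoint_eqI[of _ "\<alpha> - pi" r _ "k + 1"]) auto
  qed
qed

text \<open>If \<open>tpoint S \<theta>\<close> lies in the upper half plane, the points \<open>tpoint S (\<theta> + d)\<close> with \<open>d < piS S\<close>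
  are reached without wrapping around the angle \<open>2 pi\<close>.\<close>
lemma cross_tpoint_pos_upper:
  assumes "0 \<le> \<alpha>" "\<alpha> < pi" "r > 0" "tpoint S \<theta> = (r * cos \<alpha>, r * sin \<alpha>)"
    and "\<theta> = 2 * sector_area S \<alpha> + 2 * piS S * of_int k" "0 < d" "d < piS S"
  shows "cross (tpoint S \<theta>) (tpoint S (\<theta> + d)) > 0"
proof -
  obtain \<beta> r' k' where q: "0 \<le> \<beta>" "\<beta> < 2 * pi" "r' > 0"
    "tpoint S (\<theta> + d) = (r' * cos \<beta>, r' * sin \<beta>)"
    "\<theta> + d = 2 * sector_area S \<beta> + 2 * piS S * of_int k'"
    by (rule tpoint_polar_form)
  have "sector_area S \<alpha> < piS S / 2"
    using sector_area_strict_mono[of \<alpha> pi] sector_area_pi assms by simp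
  then have "\<theta> + d - 2 * piS S * of_int \<lfloor>(\<theta> + d) / (2 * piS S)\<rfloor> = 2 * sector_area S \<alpha> + d"
    using floor_residue_eq[of "2 * piS S" "2 * sector_area S \<alpha> + d"] piS_pos assms
      sector_area_mono[of 0 \<alpha>] sector_area_zero by (simp add: algebra_simps)
  moreover have "sector_area S \<beta> < piS S"
    using sector_area_strict_mono[of \<beta> "2 * pi"] sector_area_2pi q by simp
  then have "\<theta> + d - 2 * piS S * of_int \<lfloor>(\<theta> + d) / (2 * piS S)\<rfloor> = 2 * sector_area S \<beta>"
    using floor_residue_eq[of "2 * piS S"] piS_pos q sector_area_mono[of 0 \<beta>] sector_area_zero
    by simp
  ultimately have area: "2 * sector_area S \<beta> = 2 * sector_area S \<alpha> + d"
    by simp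
  have "\<alpha> < \<beta>"
    using area sector_area_mono[of \<beta> \<alpha>] assms by (cases "\<beta> \<le> \<alpha>") auto
  moreover have "\<beta> < \<alpha> + pi"
    using area sector_area_mono[of "\<alpha> + pi" \<beta>] sector_area_add_pi[of \<alpha>] sector_area_pi assms
    by (cases "\<alpha> + pi \<le> \<beta>") auto
  ultimately have "sin (\<beta> - \<alpha>) > 0"
    by (intro sin_gt_zero) auto
  then show ?thesis
    using assms q cross_polar_points by simp
qed

text \<open>Antipodal symmetry reduces the general case to the upper half plane.\<close>
lemma cross_tpoint_pos:
  assumes "0 < d" "d < piS S"
  shows "cross (tpoint S \<theta>) (tpoint S (\<theta> + d)) > 0"
proof -
  obtain \<alpha> r k where p: "0 \<le> \<alpha>" "\<alpha> < 2 * pi" "r > 0" "tpoint S \<theta> = (r * cos \<alpha>, r * sin \<alpha>)"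
    "\<theta> = 2 * sector_area S \<alpha> + 2 * piS S * of_int k"
    by (rule tpoint_polar_form)
  show ?thesis
  proof (cases "\<alpha> < pi")
    case True
    then show ?thesis
      using cross_tpoint_pos_upper p assms by blast
  next
    case False
    have "\<theta> - piS S = 2 * sector_area S (\<alpha> - pi) + 2 * piS S * of_int k"
      using p sector_area_add_pi[of "\<alpha> - pi"] sector_area_pi False by simp
    moreover have "- tpoint S \<theta> = (r * cos (\<alpha> - pi), r * sin (\<alpha> - pi))"
      using p by simp
    moreover have "tpoint S (\<theta> - piS S) = - tpoint S \<theta>"
      using tpoint_add_piS[of "\<theta> - piS S"] by simp
    ultimately have "cross (tpoint S (\<theta> - piS S)) (tpoint S (\<theta> - piS S + d)) > 0"
      using p False assms by (intro cross_tpoint_pos_upper[of "\<alpha> - pi" r _ k]) auto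
    moreover have "tpoint S (\<theta> - piS S + d) = - tpoint S (\<theta> + d)"
      using tpoint_add_piS[of "\<theta> - piS S + d"] by (simp add: algebra_simps)
    ultimately show ?thesis
      using \<open>tpoint S (\<theta> - piS S) = - tpoint S \<theta>\<close> by (simp add: cross_def)
  qed
qed

lemma cross_tpoint_neg:
  assumes "piS S < d" "d < 2 * piS S"
  shows "cross (tpoint S \<theta>) (tpoint S (\<theta> + d)) < 0"
proof -
  have "cross (tpoint S \<theta>) (tpoint S (\<theta> + (d - piS S))) > 0"
    using cross_tpoint_pos assms by simp
  moreover have "tpoint S (\<theta> + d) = - tpoint S (\<theta> + (d - piS S))"
    using tpoint_add_piS[of "\<theta> + (d - piS S)"] by simp
  ultimately show ?thesis
    by (simp add: cross_def)
qed

lemma tpoint_neq: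
  assumes "0 < d" "d < 2 * piS S"
  shows "tpoint S (\<theta> + d) \<noteq> tpoint S \<theta>"
proof
  assume eq: "tpoint S (\<theta> + d) = tpoint S \<theta>"
  then have "cross (tpoint S \<theta>) (tpoint S (\<theta> + d)) = 0"
    by (simp add: cross_def)
  consider "d < piS S" | "d = piS S" | "piS S < d"
    by linarith
  then show False
  proof cases
    case 1
    then show False
      using cross_tpoint_pos[OF assms(1) 1, of \<theta>] \<open>cross _ _ = 0\<close> by simp
  next
    case 2
    then show False
      using eq tpoint_add_piS[of \<theta>] tpoint_nonzero[of \<theta>]
      by (simp add: prod_eq_iff)
  next
    case 3
    then show False
      using cross_tpoint_neg[OF 3 assms(2), of \<theta>] \<open>cross _ _ = 0\<close> by simp
  qed
qed

end

section \<open>The unit ball of a norm and its polar\<close>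

lemma pairing_eq_inner: "pairing p x = p \<bullet> x"
  by (simp add: pairing_def inner_prod_def)

lemma polar_pairing_le: "p \<in> polar S \<Longrightarrow> x \<in> S \<Longrightarrow> pairing p x \<le> 1"
  unfolding polar_def by blast

lemma cramer_decomposition:
  assumes "cross u v \<noteq> 0"
  shows "x = (cross x v / cross u v) *\<^sub>R u + (cross u x / cross u v) *\<^sub>R v"
proof -
  have "x = inverse (cross u v) *\<^sub>R (cross u v *\<^sub>R x)"
    using assms by simp
  also have "cross u v *\<^sub>R x = cross x v *\<^sub>R u + cross u x *\<^sub>R v"
    by (simp add: prod_eq_iff cross_def algebra_simps)
  finally show ?thesis
    by (simp add: scaleR_add_right divide_inverse mult.commute)
qed

context
  fixes N :: "real \<times> real \<Rightarrow> real"
  assumes N: "is_norm N"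
begin

lemma N_nonneg: "0 \<le> N x"
  and N_eq_0_iff: "N x = 0 \<longleftrightarrow> x = 0"
  and N_scaleR: "N (c *\<^sub>R x) = \<bar>c\<bar> * N x"
  and N_triangle: "N (x + y) \<le> N x + N y"
  using N unfolding is_norm_def by blast+

lemma N_zero [simp]: "N 0 = 0"
  using N_eq_0_iff by simp

lemma N_uminus: "N (- x) = N x"
  using N_scaleR[of "-1" x] by simp

lemma N_convex_on: "convex_on UNIV N"
proof
  fix t :: real and x y assume "0 < t" "t < 1"
  then show "N ((1 - t) *\<^sub>R x + t *\<^sub>R y) \<le> (1 - t) * N x + t * N y"
    using N_triangle N_scaleR by (metis abs_of_nonneg diff_ge_0_iff_ge less_eq_real_def)
qed simp

lemma N_continuous_on: "continuous_on UNIV N"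
  using convex_on_continuous[OF open_UNIV N_convex_on] .

lemma N_equivalent_norm:
  obtains c K where "c > 0" "\<And>x. c * norm x \<le> N x" "\<And>x. N x \<le> K * norm x"
proof -
  have sphere: "compact (sphere (0::real \<times> real) 1)" "sphere (0::real \<times> real) 1 \<noteq> {}"
    "continuous_on (sphere 0 1) N"
    using N_continuous_on continuous_on_subset[of UNIV N] norm_polar_point[of 1 0]
    by (auto intro!: exI[of _ "(1, 0)"])
  obtain m where m: "norm m = 1" "\<And>y. norm y = 1 \<Longrightarrow> N m \<le> N y"
    using continuous_attains_inf[OF sphere] by (metis mem_sphere_0)
  obtain M where M: "\<And>y. norm y = 1 \<Longrightarrow> N y \<le> N M"
    using continuous_attains_sup[OF sphere] by (metis mem_sphere_0)
  have radial: "N x = norm x * N (inverse (norm x) *\<^sub>R x)" for x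
    using N_scaleR[of "inverse (norm x)" x] by (cases "x = 0") (auto simp: N_eq_0_iff)
  have "N m > 0"
    using m(1) N_nonneg[of m] N_eq_0_iff[of m] by fastforce
  moreover have "N m * norm x \<le> N x" "N x \<le> N M * norm x" for x
    using radial[of x] m(2)[of "inverse (norm x) *\<^sub>R x"] M[of "inverse (norm x) *\<^sub>R x"]
    by (cases "x = 0"; simp add: N_eq_0_iff mult.commute mult_left_mono)+
  ultimately show ?thesis
    using that by blast
qed

lemma N_less_1_interior: "N x < 1 \<Longrightarrow> x \<in> interior (Omega N)"
proof -
  have "open {x. N x < 1}"
    using open_Collect_less[OF N_continuous_on continuous_on_const] by simp
  moreover have "{x. N x < 1} \<subseteq> Omega N"
    unfolding Omega_def by auto
  moreover assume "N x < 1"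
  ultimately show ?thesis
    using interior_maximal by blast
qed

lemma Omega_body: "symmetric_convex_body (Omega N)"
proof -
  obtain c where c: "c > 0" "\<And>x. c * norm x \<le> N x"
    using N_equivalent_norm by metis
  have "bounded (Omega N)"
    unfolding bounded_iff Omega_def using c by (auto intro!: exI[of _ "1 / c"] simp: field_simps)
      (meson c(2) order_trans)
  moreover have "closed (Omega N)"
    unfolding Omega_def using closed_Collect_le[OF N_continuous_on continuous_on_const] by simp
  moreover have "convex (Omega N)"
    unfolding convex_def Omega_def
  proof (intro ballI allI impI)
    fix x y :: "real \<times> real" and u v :: real
    assume "x \<in> {x. N x \<le> 1}" "y \<in> {x. N x \<le> 1}" "0 \<le> u" "0 \<le> v" "u + v = 1"
    then show "u *\<^sub>R x + v *\<^sub>R y \<in> {x. N x \<le> 1}"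
      using N_triangle[of "u *\<^sub>R x" "v *\<^sub>R y"] N_scaleR mult_left_mono[of "N _" 1]
      by (smt (verit) abs_of_nonneg mem_Collect_eq)
  qed
  moreover have "0 \<in> interior (Omega N)"
    using N_less_1_interior[of 0] by simp
  ultimately show ?thesis
    unfolding symmetric_convex_body_def compact_eq_bounded_closed
    by (simp add: Omega_def N_uminus)
qed

lemma N_frontier_Omega:
  assumes "x \<in> frontier (Omega N)"
  shows "N x = 1"
proof -
  have "N x \<le> 1"
    using assms frontier_subset_body[OF Omega_body] unfolding Omega_def by blast
  moreover have "\<not> N x < 1"
    using assms N_less_1_interior unfolding frontier_def by blast
  ultimately show ?thesis
    by simp
qed

lemma pairing_le_N:
  assumes "p \<in> polar (Omega N)"
  shows "pairing p x \<le> N x"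
proof (cases "x = 0")
  case False
  then have "N x > 0"
    using N_nonneg[of x] N_eq_0_iff[of x] by simp
  then have "inverse (N x) *\<^sub>R x \<in> Omega N"
    unfolding Omega_def using N_scaleR by simp
  then have "inverse (N x) * pairing p x \<le> 1"
    using assms unfolding polar_def by (force simp: pairing_def algebra_simps)
  then show ?thesis
    using \<open>N x > 0\<close> by (simp add: field_simps)
qed (simp add: pairing_def)

lemma polar_Omega_eq_Inter: "polar (Omega N) = (\<Inter>x\<in>Omega N. {p. x \<bullet> p \<le> 1})"
  unfolding polar_def pairing_eq_inner by (simp add: set_eq_iff inner_commute)

lemma polar_Omega_bounded: "bounded (polar (Omega N))"
proof -
  obtain K where K: "\<And>x. N x \<le> K * norm x"
    using N_equivalent_norm by metis
  have "norm p \<le> max K 0" if "p \<in> polar (Omega N)" for p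
  proof -
    have "norm p ^ 2 \<le> K * norm p"
      using pairing_le_N[OF that, of p] K[of p] by (simp add: pairing_eq_inner power2_norm_eq_inner)
    then show ?thesis
      by (cases "norm p = 0") (auto simp: power2_eq_square)
  qed
  then show ?thesis
    unfolding bounded_iff by blast
qed

lemma zero_in_interior_polar_Omega: "0 \<in> interior (polar (Omega N))"
proof -
  obtain c where c: "c > 0" "\<And>x. c * norm x \<le> N x"
    using N_equivalent_norm by metis
  have "ball 0 c \<subseteq> polar (Omega N)"
  proof
    fix p :: "real \<times> real" assume "p \<in> ball 0 c"
    have "p \<bullet> x \<le> 1" if "N x \<le> 1" for x
    proof -
      have "p \<bullet> x \<le> norm p * norm x"
        by (rule norm_cauchy_schwarz)
      also have "\<dots> \<le> c * norm x"
        using \<open>p \<in> ball 0 c\<close> by (intro mult_right_mono) auto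
      also have "\<dots> \<le> 1"
        using c(2)[of x] that by linarith
      finally show ?thesis .
    qed
    then show "p \<in> polar (Omega N)"
      unfolding polar_def Omega_def pairing_eq_inner by blast
  qed
  then show ?thesis
    using c(1) interior_maximal[OF _ open_ball] by (meson centre_in_ball subsetD)
qed

lemma uminus_polar_Omega:
  assumes p: "p \<in> polar (Omega N)"
  shows "- p \<in> polar (Omega N)"
proof -
  have "pairing p (- x) \<le> 1" if "N x \<le> 1" for x
  proof -
    have "- x \<in> Omega N"
      using that N_uminus[of x] by (simp add: Omega_def)
    then show ?thesis
      using p unfolding polar_def by blast
  qed
  then show ?thesis
    unfolding polar_def Omega_def pairing_eq_inner by simp
qed

lemma polar_body: "symmetric_convex_body (polar (Omega N))"
  using polar_Omega_bounded zero_in_interior_polar_Omega uminus_polar_Omega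
  unfolding symmetric_convex_body_def compact_eq_bounded_closed polar_Omega_eq_Inter
  by (simp add: closed_INT closed_halfspace_le convex_INT convex_halfspace_le)

text \<open>A supporting functional of \<open>Omega N\<close> that touches the boundary at two trigonometric points less
  than half a turn apart touches it along the whole arc between them: an intermediate point is a
  positive combination of the two, so its norm is at most the sum of the coefficients, which is the
  value of the functional there.\<close>
lemma supporting_functional_on_arc:
  assumes p: "p \<in> polar (Omega N)" and short: "\<theta>b < \<theta>a + piS (Omega N)"
    and touch: "pairing p (tpoint (Omega N) \<theta>a) = 1" "pairing p (tpoint (Omega N) \<theta>b) = 1"
    and t: "t \<in> {\<theta>a..\<theta>b}"
  shows "pairing p (tpoint (Omega N) t) = 1"
proof (cases "t = \<theta>a \<or> t = \<theta>b")
  case False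
  let ?P = "tpoint (Omega N)"
  have "cross (?P s) (?P s') > 0" if "s < s'" "s' < s + piS (Omega N)" for s s'
    using cross_tpoint_pos[OF Omega_body, of "s' - s" s] that by simp
  then have cr: "cross (?P \<theta>a) (?P \<theta>b) > 0" "cross (?P \<theta>a) (?P t) > 0" "cross (?P t) (?P \<theta>b) > 0"
    using False t short by auto
  define \<mu> \<nu> where "\<mu> = cross (?P t) (?P \<theta>b) / cross (?P \<theta>a) (?P \<theta>b)"
    and "\<nu> = cross (?P \<theta>a) (?P t) / cross (?P \<theta>a) (?P \<theta>b)"
  have x: "?P t = \<mu> *\<^sub>R ?P \<theta>a + \<nu> *\<^sub>R ?P \<theta>b"
    unfolding \<mu>_def \<nu>_def using cramer_decomposition cr(1) by simp
  have "\<mu> > 0" "\<nu> > 0"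
    unfolding \<mu>_def \<nu>_def using cr by auto
  have N1: "N (?P s) = 1" for s
    using N_frontier_Omega tpoint_frontier[OF Omega_body] by blast
  have "1 \<le> \<mu> + \<nu>"
    using N_triangle[of "\<mu> *\<^sub>R ?P \<theta>a" "\<nu> *\<^sub>R ?P \<theta>b"] N_scaleR \<open>\<mu> > 0\<close> \<open>\<nu> > 0\<close> N1 x
    by (metis abs_of_pos mult.right_neutral)
  moreover have "pairing p (?P t) = \<mu> + \<nu>"
    using x touch by (simp add: pairing_eq_inner inner_add_right)
  moreover have "pairing p (?P t) \<le> 1"
    using pairing_le_N[OF p] N1 by metis
  ultimately show ?thesis
    by simp
qed (use touch in auto)

text \<open>At a boundary point where the norm is differentiable, every supporting functional is the
  derivative of the norm, since \<open>N - pairing p\<close> attains its minimum there.\<close>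
lemma C1_norm_supporting_functional_unique:
  assumes "C1_norm N" "a \<in> frontier (Omega N)"
    and "p \<in> polar (Omega N)" "pairing p a = 1" "q \<in> polar (Omega N)" "pairing q a = 1"
  shows "p = q"
proof -
  obtain N' where N': "(N has_derivative blinfun_apply N') (at a)"
    using assms(1,2) zero_notin_frontier[OF Omega_body] unfolding C1_norm_def by metis
  have derivative: "blinfun_apply N' = pairing p" if "p \<in> polar (Omega N)" "pairing p a = 1" for p
  proof -
    have "((\<lambda>x. N x - pairing p x) has_derivative (\<lambda>h. blinfun_apply N' h - pairing p h)) (at a)"
      unfolding pairing_eq_inner by (intro has_derivative_diff N' has_derivative_inner_right has_derivative_ident)
    moreover have "\<forall>\<^sub>F y in at a. N a - pairing p a \<le> N y - pairing p y"
      using pairing_le_N[OF that(1)] N_frontier_Omega[OF assms(2)] that(2) by simp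
    ultimately have "(\<lambda>h. blinfun_apply N' h - pairing p h) = (\<lambda>h. 0)"
      by (rule has_derivative_local_min)
    then show ?thesis
      by (simp add: fun_eq_iff)
  qed
  have "pairing p h = pairing q h" for h
    using derivative[OF assms(3,4)] derivative[OF assms(5,6)] by metis
  from this[of "(1, 0)"] this[of "(0, 1)"] show ?thesis
    by (simp add: pairing_def prod_eq_iff)
qed

end

section \<open>Corresponding angles\<close>

lemma corresp_iff_pairing:
  "corresp N \<theta> \<phi> \<longleftrightarrow> pairing (tpoint (polar (Omega N)) \<phi>) (tpoint (Omega N) \<theta>) = 1"
  unfolding corresp_def cosT_def sinT_def pairing_def by (simp add: mult.commute)

context
  fixes N :: "real \<times> real \<Rightarrow> real" and C :: "real \<Rightarrow> real set"
  assumes N: "is_norm N" and C: "is_Clow N C"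
begin

abbreviation "\<Omega> \<equiv> Omega N"
abbreviation "\<Omega>' \<equiv> polar (Omega N)"


lemma C_value:
  "(\<exists>a b. a \<le> b \<and> C \<phi> = {a..b}) \<and> C \<phi> \<subseteq> {\<theta>. corresp N \<theta> \<phi>} \<and>
   (\<forall>J. is_interval J \<and> C \<phi> \<subseteq> J \<and> J \<subseteq> {\<theta>. corresp N \<theta> \<phi>} \<longrightarrow> J = C \<phi>)"
  using C[unfolded is_Clow_def, THEN conjunct1] by blast

lemma C_nonempty:
  obtains \<theta> where "\<theta> \<in> C \<phi>"
proof -
  obtain a b where "a \<le> b" "C \<phi> = {a..b}"
    using C_value by blast
  then show thesis
    using that[of a] by simp
qed

lemma C_corresp: "\<theta> \<in> C \<phi> \<Longrightarrow> pairing (tpoint \<Omega>' \<phi>) (tpoint \<Omega> \<theta>) = 1"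
  using C_value corresp_iff_pairing by blast

lemma C_maximal:
  assumes "is_interval J" "C \<phi> \<subseteq> J" "\<And>\<theta>. \<theta> \<in> J \<Longrightarrow> pairing (tpoint \<Omega>' \<phi>) (tpoint \<Omega> \<theta>) = 1"
  shows "J = C \<phi>"
proof -
  have "J \<subseteq> {\<theta>. corresp N \<theta> \<phi>}"
    using assms(3) corresp_iff_pairing by blast
  then show ?thesis
    using C_value assms(1,2) by blast
qed

lemma C_mono: "\<lbrakk>\<phi>1 < \<phi>2; \<theta>1 \<in> C \<phi>1; \<theta>2 \<in> C \<phi>2\<rbrakk> \<Longrightarrow> \<theta>1 \<le> \<theta>2"
  using C[unfolded is_Clow_def, THEN conjunct2, THEN conjunct1] by blast

lemma C_add_turns: "C (\<phi> + 2 * of_int k * piS \<Omega>') = (\<lambda>\<theta>. \<theta> + 2 * of_int k * piS \<Omega>) ` C \<phi>"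
  using C[unfolded is_Clow_def, THEN conjunct2, THEN conjunct2] by blast

lemma C_minus_turn: "C (\<phi> - 2 * piS \<Omega>') = (\<lambda>\<theta>. \<theta> - 2 * piS \<Omega>) ` C \<phi>"
  using C_add_turns[of \<phi> "-1"] by simp

text \<open>Half a turn of the dual angle is half a turn of the primal angle: the functional
  \<open>tpoint \<Omega>' \<phi>\<close> supports \<open>\<Omega>\<close> at \<open>\<theta>3 - piS \<Omega>\<close> by antipodal symmetry, hence along the whole arc to
  \<open>\<theta>1\<close>, which by maximality of \<open>C \<phi> = {\<theta>1}\<close> must be a single point.\<close>
lemma C_add_half_turn:
  assumes "C \<phi> = {\<theta>1}" "\<theta>3 \<in> C (\<phi> + piS \<Omega>')"
  shows "\<theta>3 = \<theta>1 + piS \<Omega>"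
proof -
  define \<theta> where "\<theta> = \<theta>3 - piS \<Omega>"
  define p where "p = tpoint \<Omega>' \<phi>"
  have "\<theta>1 \<le> \<theta>3"
    using C_mono[of \<phi> "\<phi> + piS \<Omega>'"] assms piS_pos[OF polar_body[OF N]] by simp
  moreover have "\<theta>3 \<le> \<theta>1 + 2 * piS \<Omega>"
    using C_mono[of "\<phi> + piS \<Omega>'" "\<phi> + 2 * piS \<Omega>'"] C_add_turns[of \<phi> 1] assms piS_pos[OF polar_body[OF N]]
    by simp
  ultimately have near: "\<bar>\<theta> - \<theta>1\<bar> \<le> piS \<Omega>"
    unfolding \<theta>_def by linarith
  have p1: "pairing p (tpoint \<Omega> \<theta>1) = 1"
    using C_corresp assms(1) unfolding p_def by blast
  have "pairing (tpoint \<Omega>' (\<phi> + piS \<Omega>')) (tpoint \<Omega> (\<theta> + piS \<Omega>)) = 1"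
    using C_corresp[OF assms(2)] unfolding \<theta>_def by simp
  then have p2: "pairing p (tpoint \<Omega> \<theta>) = 1"
    unfolding p_def tpoint_add_piS[OF Omega_body[OF N]] tpoint_add_piS[OF polar_body[OF N]] by (simp add: pairing_def)
  have far: "\<bar>\<theta> - \<theta>1\<bar> \<noteq> piS \<Omega>"
  proof
    assume "\<bar>\<theta> - \<theta>1\<bar> = piS \<Omega>"
    then have "\<theta> = \<theta>1 + piS \<Omega> \<or> \<theta>1 = \<theta> + piS \<Omega>"
      by linarith
    then have "tpoint \<Omega> \<theta> = - tpoint \<Omega> \<theta>1"
      using tpoint_add_piS[OF Omega_body[OF N], of \<theta>] tpoint_add_piS[OF Omega_body[OF N], of \<theta>1] by auto
    then show False
      using p1 p2 by (simp add: pairing_def)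
  qed
  have p: "p \<in> \<Omega>'"
    unfolding p_def by (rule tpoint_in_body[OF polar_body[OF N]])
  from near far have short: "max \<theta> \<theta>1 < min \<theta> \<theta>1 + piS \<Omega>"
    by linarith
  have "pairing p (tpoint \<Omega> t) = 1" if "t \<in> {min \<theta> \<theta>1..max \<theta> \<theta>1}" for t
  proof (cases "\<theta> \<le> \<theta>1")
    case True
    then show ?thesis
      using supporting_functional_on_arc[OF N p _ p2 p1] that short by simp
  next
    case False
    then show ?thesis
      using supporting_functional_on_arc[OF N p _ p1 p2] that short by simp
  qed
  then have "{min \<theta> \<theta>1..max \<theta> \<theta>1} = C \<phi>"
    using assms(1) unfolding p_def by (intro C_maximal) auto
  then have "\<theta> = \<theta>1"
    using assms(1) by (simp add: min_def max_def split: if_splits)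
  then show ?thesis
    unfolding \<theta>_def by simp
qed

lemma C_preimage_lower_bound:
  assumes "C \<phi> = {\<theta>1}" "\<theta>1 \<in> C \<phi>'"
  shows "\<phi> - 2 * piS \<Omega>' < \<phi>'"
proof (rule ccontr)
  assume "\<not> \<phi> - 2 * piS \<Omega>' < \<phi>'"
  moreover have "C (\<phi> - 2 * piS \<Omega>') = {\<theta>1 - 2 * piS \<Omega>}"
    using C_minus_turn assms(1) by simp
  ultimately have "\<theta>1 \<le> \<theta>1 - 2 * piS \<Omega>"
    using C_mono[of \<phi>' "\<phi> - 2 * piS \<Omega>'" \<theta>1] assms(2) by (cases "\<phi>' = \<phi> - 2 * piS \<Omega>'") auto
  then show False
    using piS_pos[OF Omega_body[OF N]] by simp
qed

lemma delta_minus_singleton: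
  assumes "C \<phi> = {\<theta>1}"
  shows "delta_minus C \<phi> = \<phi> - Inf {\<phi>'. \<theta>1 \<in> C \<phi>'}"
    and "bdd_below {\<phi>'. \<theta>1 \<in> C \<phi>'}" "\<phi> \<in> {\<phi>'. \<theta>1 \<in> C \<phi>'}"
  using assms C_preimage_lower_bound[OF assms]
  by (auto simp: delta_minus_def Cup_def bdd_below_def intro: less_imp_le)

lemma D0_singleton: "\<phi> \<in> D0 C \<Longrightarrow> C \<phi> = {phio C \<phi>}"
  unfolding D0_def phio_def by (auto intro: the_equality[symmetric] theI)

lemma JR_eq:
  assumes "C \<phi> = {\<theta>1}" "C (\<phi> + \<psi>) = {\<theta>2}"
  shows "JR N C \<phi> \<psi> = 2 - pairing (tpoint \<Omega>' (\<phi> + \<psi>)) (tpoint \<Omega> \<theta>1)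
            - pairing (tpoint \<Omega>' \<phi>) (tpoint \<Omega> \<theta>2) - \<psi> * cross (tpoint \<Omega> \<theta>1) (tpoint \<Omega> \<theta>2)"
proof -
  have "phio C \<phi> = \<theta>1" "phio C (\<phi> + \<psi>) = \<theta>2"
    unfolding phio_def using assms by auto
  then show ?thesis
    unfolding JR_def Let_def cosT_def sinT_def pairing_def cross_def by (simp add: algebra_simps)
qed

lemma C_range:
  assumes "C \<phi> = {\<theta>1}" "C (\<phi> + \<psi>) = {\<theta>2}"
    and "piS \<Omega>' < \<psi>" "\<psi> < 2 * piS \<Omega>' - delta_minus C \<phi>"
  shows "\<theta>1 + piS \<Omega> \<le> \<theta>2" "\<theta>2 < \<theta>1 + 2 * piS \<Omega>"
proof -
  obtain \<theta>3 where "\<theta>3 \<in> C (\<phi> + piS \<Omega>')"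
    using C_nonempty by blast
  then show "\<theta>1 + piS \<Omega> \<le> \<theta>2"
    using C_add_half_turn[OF assms(1)] C_mono[of "\<phi> + piS \<Omega>'" "\<phi> + \<psi>"] assms by auto
  let ?I = "{\<phi>'. \<theta>1 \<in> C \<phi>'}"
  have below: "\<phi> + \<psi> - 2 * piS \<Omega>' < Inf ?I"
    using assms(4) delta_minus_singleton(1)[OF assms(1)] by simp
  moreover have "C (\<phi> + \<psi> - 2 * piS \<Omega>') = {\<theta>2 - 2 * piS \<Omega>}"
    using C_minus_turn[of "\<phi> + \<psi>"] assms(2) by simp
  ultimately have "\<theta>2 - 2 * piS \<Omega> \<noteq> \<theta>1"
    using cInf_lower[OF _ delta_minus_singleton(2)[OF assms(1)]] by force
  moreover have "\<theta>2 - 2 * piS \<Omega> \<le> \<theta>1"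
    using C_mono[of "\<phi> + \<psi> - 2 * piS \<Omega>'" \<phi> "\<theta>2 - 2 * piS \<Omega>" \<theta>1] assms(1,2) below
      cInf_lower[OF delta_minus_singleton(3,2)[OF assms(1)]] C_minus_turn[of "\<phi> + \<psi>"]
    by simp
  ultimately show "\<theta>2 < \<theta>1 + 2 * piS \<Omega>"
    by simp
qed

text \<open>The two pairings in \<open>JR\<close> are at most \<open>1\<close>, and the cross term has the right sign because the
  primal angle has advanced by at least half a turn and less than a full turn.\<close>
lemma JR_pos:
  assumes "\<phi> \<in> D0 C" "\<phi> + \<psi> \<in> D0 C" "piS \<Omega>' < \<psi>" "\<psi> < 2 * piS \<Omega>' - delta_minus C \<phi>"
  shows "JR N C \<phi> \<psi> > 0"
proof -
  define \<theta>1 \<theta>2 where "\<theta>1 = phio C \<phi>" and "\<theta>2 = phio C (\<phi> + \<psi>)"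
  have C1: "C \<phi> = {\<theta>1}" and C2: "C (\<phi> + \<psi>) = {\<theta>2}"
    unfolding \<theta>1_def \<theta>2_def using D0_singleton assms(1,2) by auto
  define a b p q where "a = tpoint \<Omega> \<theta>1" and "b = tpoint \<Omega> \<theta>2"
    and "p = tpoint \<Omega>' \<phi>" and "q = tpoint \<Omega>' (\<phi> + \<psi>)"
  have JR: "JR N C \<phi> \<psi> = 2 - pairing q a - pairing p b - \<psi> * cross a b"
    using JR_eq[OF C1 C2] unfolding a_def b_def p_def q_def .
  have "pairing q a \<le> 1" "pairing p b \<le> 1"
    unfolding a_def b_def p_def q_def
    using polar_pairing_le tpoint_in_body[OF Omega_body[OF N]] tpoint_in_body[OF polar_body[OF N]] by blast+
  moreover have "\<psi> > 0"
    using assms(3) piS_pos[OF polar_body[OF N]] by simp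
  moreover have "b = - a \<or> cross a b < 0"
    using C_range[OF C1 C2 assms(3,4)] tpoint_add_piS[OF Omega_body[OF N], of \<theta>1]
      cross_tpoint_neg[OF Omega_body[OF N], of "\<theta>2 - \<theta>1" \<theta>1]
    unfolding a_def b_def by (cases "\<theta>2 = \<theta>1 + piS \<Omega>") auto
  moreover have "pairing p a = 1"
    using C_corresp C1 unfolding a_def p_def by blast
  ultimately show ?thesis
    unfolding JR using mult_pos_neg[of \<psi> "cross a b"] by (auto simp: pairing_def cross_def)
qed

text \<open>For a \<open>C\<^sup>1\<close> norm the supporting functional at a boundary point is unique, so no other dual
  angle within one turn below \<open>\<phi>\<close> corresponds to \<open>phio C \<phi>\<close>.\<close>
lemma delta_minus_C1_norm:
  assumes "C1_norm N" "\<phi> \<in> D0 C"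
  shows "delta_minus C \<phi> = 0"
proof -
  define \<theta>1 where "\<theta>1 = phio C \<phi>"
  have C1: "C \<phi> = {\<theta>1}"
    unfolding \<theta>1_def using D0_singleton assms(2) by auto
  have "Inf {\<phi>'. \<theta>1 \<in> C \<phi>'} = \<phi>"
  proof (rule cInf_eq_minimum)
    fix \<phi>' assume "\<phi>' \<in> {\<phi>'. \<theta>1 \<in> C \<phi>'}"
    then have "tpoint \<Omega>' \<phi>' = tpoint \<Omega>' \<phi>"
      using C_corresp C1 tpoint_frontier[OF Omega_body[OF N]] tpoint_in_body[OF polar_body[OF N]]
      by (intro C1_norm_supporting_functional_unique[OF N assms(1)]) auto
    moreover have "\<phi> - 2 * piS \<Omega>' < \<phi>'"
      using C_preimage_lower_bound C1 \<open>\<phi>' \<in> _\<close> by blast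
    ultimately show "\<phi> \<le> \<phi>'"
      using tpoint_neq[OF polar_body[OF N], of "\<phi> - \<phi>'" \<phi>'] by (cases "\<phi>' < \<phi>") auto
  qed (use C1 in auto)
  then show ?thesis
    using delta_minus_singleton(1)[OF C1] by simp
qed

end

theorem proposition3p10:
  fixes N :: "real \<times> real \<Rightarrow> real" and C :: "real \<Rightarrow> real set"
  assumes "is_norm N" and "is_Clow N C"
  shows "(\<forall>\<phi> \<psi>. \<phi> \<in> D0 C \<and> \<phi> + \<psi> \<in> D0 C \<and> piS (polar (Omega N)) < \<psi> \<and>
              \<psi> < 2 * piS (polar (Omega N)) - delta_minus C \<phi> \<longrightarrow> JR N C \<phi> \<psi> > 0)
       \<and> (C1_norm N \<longrightarrow>
          (\<forall>\<phi> \<psi>. \<phi> \<in> D0 C \<and> \<phi> + \<psi> \<in> D0 C \<and> piS (polar (Omega N)) < \<psi> \<and>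
              \<psi> < 2 * piS (polar (Omega N)) \<longrightarrow> JR N C \<phi> \<psi> > 0))"
proof (intro conjI allI impI)
  fix \<phi> \<psi>
  assume "\<phi> \<in> D0 C \<and> \<phi> + \<psi> \<in> D0 C \<and> piS (polar (Omega N)) < \<psi> \<and>
      \<psi> < 2 * piS (polar (Omega N)) - delta_minus C \<phi>"
  then show "JR N C \<phi> \<psi> > 0"
    using JR_pos[OF assms] by blast
next
  fix \<phi> \<psi>
  assume "C1_norm N" and "\<phi> \<in> D0 C \<and> \<phi> + \<psi> \<in> D0 C \<and> piS (polar (Omega N)) < \<psi> \<and>
      \<psi> < 2 * piS (polar (Omega N))"
  then show "JR N C \<phi> \<psi> > 0"
    using JR_pos[OF assms] delta_minus_C1_norm[OF assms] by simp
qed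

end
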